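(* Suppose $g$ is polyhedral with parameter $\rho>0$, and Assumptions 1 and 2 below hold. Let $\hat{\boldsymbol\pi}$ be a probability vector on $\mathcal Z$ and $\hat r$ a reward estimate with $\max_k|\hat\pi_k-\pi_k|\le\delta_z\le\epsilon_z$ and $\max_{n,k,\mathbf b}|\hat r_n(\mathbf z_k,\mathbf b)-r_n(\mathbf z_k,\mu_n(\mathbf z_k,\mathbf b))|\le\delta_r\le\epsilon_r$. Let $\boldsymbol\alpha^*$ minimize $g$, $\tilde{\boldsymbol\alpha}^*$ minimize $\tilde g$, and $\hat{\boldsymbol\alpha}^*$ minimize $\hat g^{\hat\pi}$ (each over $\boldsymbol\alpha^d\succeq 0$, $\boldsymbol\alpha^q\in\mathbb R^N$, $\boldsymbol\alpha^h\in\mathbb R^M$). Then there is a constant $\eta\in(0,\eta_0]$ depending only on the system parameters (not on $V$, $\hat\pi$, $\hat r$) such that $$\|\hat{\boldsymbol\alpha}^*-\tilde{\boldsymbol\alpha}^*\|\le\frac{2\delta_z V f_{\max}\vartheta}{\rho},\qquad \|\boldsymbol\alpha^*-\tilde{\boldsymbol\alpha}^*\|\le\frac{2Vf_{\max}\delta_r}{\rho\eta},$$ where $f_{\max}=N\beta r_{\max}+c_{\max}$ and $\vartheta=|\mathcal Z|(1+r_{\max}+A_{\max}+\mu_{\max}+Nb_{\max}+h_{\max})/\eta$.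
   Context: System data. A finite state set $\mathcal Z=\{\mathbf z_1,\dots,\mathbf z_K\}$ with true probabilities $\pi_k$; each $\mathbf z_k$ specifies task arrivals $\mathbf A^k\in[0,A_{\max}]^N$ and resource arrivals $\mathbf e^k\in[0,h_{\max}]^M$. For each $k$, $\mathcal B_k$ is a finite set of nonnegative $M\times N$ matrices $\mathbf b=(b_{mn})$, $b_{\max}$ the largest entry over all $\mathcal B_k$. Service functions $\mu_n(\mathbf z,\mathbf b)\in[0,\mu_{\max}]$, cost $c(\mathbf z,\mathbf b)\in[0,c_{\max}]$, true mean-reward functions $r_n(\mathbf z,\mu)\in[0,r_{\max}]$; utilities $U_n$ increasing concave with $U_n(0)=0$ and $\beta=\max_{n,r}U_n'(r)<\infty$. Parameter $V\ge1$. Write $\boldsymbol\alpha=(\boldsymbol\alpha^d,\boldsymbol\alpha^q,\boldsymbol\alpha^h)\in\mathbb R^N_{\ge0}\times\mathbb R^N\times\mathbb R^M$. Dual functions. For a reward table $\rho_n(\mathbf z_k,\mathbf b)$ (either the true $r_n(\mathbf z_k,\mu_n(\mathbf z_k,\mathbf b))$ or an estimate $\hat r_n(\mathbf z_k,\mathbf b)$), define $g_k(\boldsymbol\alpha)=\sup\{V[\sum_nU_n(\gamma_n)-c(\mathbf z_k,\mathbf b)]-\sum_n\alpha^d_n[\rho_n(\mathbf z_k,\mathbf b)-\gamma_n]-\sum_n\alpha^q_n[R_n-\mu_n(\mathbf z_k,\mathbf b)]-\sum_m\alpha^h_m[\sum_n b_{mn}-h_m]\}$, the sup over $\boldsymbol\gamma\in[0,r_{\max}]^N$,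 $\mathbf 0\preceq\mathbf R\preceq\mathbf A^k$, $\mathbf b\in\mathcal B_k$, $\mathbf 0\preceq\mathbf h\preceq\mathbf e^k$. Then $g=\sum_k\pi_kg_k$ with true rewards; $\tilde g=\sum_k\pi_k g_k$ with estimated rewards $\hat r$; $\hat g^{\hat\pi}=\sum_k\hat\pi_kg_k$ with estimated rewards $\hat r$ and estimated distribution $\hat\pi$. Polyhedral: a dual function $g$ with minimizer $\boldsymbol\alpha^*$ is polyhedral with parameter $\rho>0$ if $g(\boldsymbol\alpha^* )\le g(\boldsymbol\alpha)-\rho\|\boldsymbol\alpha^*-\boldsymbol\alpha\|$ for all feasible $\boldsymbol\alpha$ (Euclidean norm). Assumption 1: there exist constants $\epsilon_r,\epsilon_z,\eta_0>0$ such that for every probability vector $\hat\pi$ and estimate $\hat r$ with $\|\hat\pi-\pi\|\le\epsilon_z$ and $\|\hat r-r\|\le\epsilon_r$ there exist $\boldsymbol\gamma\in[0,r_{\max}]^N$ and, for each $k$, actions $(\mathbf R^k_i,\mathbf b^k_i,\mathbf h^k_i)_{i\ge1}$ with $\mathbf 0\preceq\mathbf R^k_i\preceq\mathbf A^k$, $\mathbf b^k_i\in\mathcal B_k$, $\mathbf 0\preceq\mathbf h^k_i\preceq\mathbf e^k$ and weights $\lambda^k_i\ge0$, $\sum_i\lambda^k_i=1$, such that for all $n,m$: $\gamma_n-\sum_k\hat\pi_k\sum_i\lambda^k_i\hat r_n(\mathbf z_k,\mathbf b^k_i)\le-\eta_0$; $\sum_k\hat\pi_k\sum_i\lambda^k_iR^k_{in}=\sum_k\hat\pi_k\sum_i\lambda^k_i\mu_n(\mathbf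 z_k,\mathbf b^k_i)$; $\sum_k\hat\pi_k\sum_i\lambda^k_i\sum_nb^k_{imn}=\sum_k\hat\pi_k\sum_i\lambda^k_ih^k_{im}$; and $0<\sum_k\hat\pi_k\sum_i\lambda^k_iR^k_{in}<\sum_k\hat\pi_kA^k_n$, $0<\sum_k\hat\pi_k\sum_i\lambda^k_ih^k_{im}<\sum_k\hat\pi_ke^k_m$. Assumption 2: for every such $\hat\pi,\hat r$ (within $\epsilon_z,\epsilon_r$), if $g$ is polyhedral with parameter $\rho$ then $\hat g^{\hat\pi}$ is polyhedral with parameter $\rho$ (this includes $\hat\pi=\pi$, i.e. $\tilde g$). *)

theory Defs
  imports "HOL-Analysis.Analysis"
begin

text \<open>The state space Z is a finite type 'k (z_k indexed by k), tasks are
indexed by a finite type 'n (so N = CARD('n)), resources by a finite type 'm (M = CARD('m)).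
An allocation b is an M x N matrix, b $ m $ n = b_{mn}.  A dual variable
alpha = (alpha^d, alpha^q, alpha^h) lives in real^'n x real^'n x real^'m, whose norm is the
Euclidean norm.\<close>

type_synonym ('n,'m) alloc = "real^'n^'m"
type_synonym ('n,'m) dualvar = "(real^'n) \<times> (real^'n) \<times> (real^'m)"

definition prob_vec :: "('k::finite \<Rightarrow> real) \<Rightarrow> bool" where
  "prob_vec p \<longleftrightarrow> (\<forall>k. 0 \<le> p k) \<and> (\<Sum>k\<in>UNIV. p k) = 1"

definition gk :: "real \<Rightarrow> ('n::finite \<Rightarrow> real \<Rightarrow> real) \<Rightarrow> real
    \<Rightarrow> (('n,'m::finite) alloc \<Rightarrow> real) \<Rightarrow> (('n,'m) alloc \<Rightarrow> 'n \<Rightarrow> real)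
    \<Rightarrow> (('n,'m) alloc \<Rightarrow> 'n \<Rightarrow> real) \<Rightarrow> real^'n \<Rightarrow> real^'m \<Rightarrow> ('n,'m) alloc set
    \<Rightarrow> ('n,'m) dualvar \<Rightarrow> real" where
  "gk V U rmax c rho mu Ak ek Bk \<alpha> = (case \<alpha> of (ad, aq, ah) \<Rightarrow>
     Sup { V * ((\<Sum>n\<in>UNIV. U n (\<gamma>$n)) - c b)
           - (\<Sum>n\<in>UNIV. ad$n * (rho b n - \<gamma>$n))
           - (\<Sum>n\<in>UNIV. aq$n * (R$n - mu b n))
           - (\<Sum>m\<in>UNIV. ah$m * ((\<Sum>n\<in>UNIV. b$m$n) - h$m))
         | \<gamma> R b h. (\<forall>n. 0 \<le> \<gamma>$n \<and> \<gamma>$n \<le> rmax) \<and> (\<forall>n. 0 \<le> R$n \<and> R$n \<le> Ak$n)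
                 \<and> b \<in> Bk \<and> (\<forall>m. 0 \<le> h$m \<and> h$m \<le> ek$m) })"

definition dual_fun :: "real \<Rightarrow> ('n::finite \<Rightarrow> real \<Rightarrow> real) \<Rightarrow> real
    \<Rightarrow> ('k::finite \<Rightarrow> ('n,'m::finite) alloc \<Rightarrow> real) \<Rightarrow> ('k \<Rightarrow> ('n,'m) alloc \<Rightarrow> 'n \<Rightarrow> real)
    \<Rightarrow> ('k \<Rightarrow> ('n,'m) alloc \<Rightarrow> 'n \<Rightarrow> real) \<Rightarrow> ('k \<Rightarrow> real^'n) \<Rightarrow> ('k \<Rightarrow> real^'m)
    \<Rightarrow> ('k \<Rightarrow> ('n,'m) alloc set) \<Rightarrow> ('k \<Rightarrow> real) \<Rightarrow> ('n,'m) dualvar \<Rightarrow> real" where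
  "dual_fun V U rmax c rho mu A e B p \<alpha> =
     (\<Sum>k\<in>UNIV. p k * gk V U rmax (c k) (rho k) (mu k) (A k) (e k) (B k) \<alpha>)"

definition true_table :: "('k \<Rightarrow> 'n \<Rightarrow> real \<Rightarrow> real) \<Rightarrow> ('k \<Rightarrow> ('n,'m) alloc \<Rightarrow> 'n \<Rightarrow> real)
    \<Rightarrow> 'k \<Rightarrow> ('n,'m) alloc \<Rightarrow> 'n \<Rightarrow> real" where
  "true_table r mu k b n = r k n (mu k b n)"

definition dual_feasible :: "('n::finite,'m::finite) dualvar set" where
  "dual_feasible = {(ad, aq, ah). \<forall>n. 0 \<le> ad$n}"

definition is_dual_min :: "(('n::finite,'m::finite) dualvar \<Rightarrow> real) \<Rightarrow> ('n,'m) dualvar \<Rightarrow> bool" where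
  "is_dual_min G a \<longleftrightarrow> a \<in> dual_feasible \<and> (\<forall>a'\<in>dual_feasible. G a \<le> G a')"

definition polyhedral :: "(('n::finite,'m::finite) dualvar \<Rightarrow> real) \<Rightarrow> real \<Rightarrow> bool" where
  "polyhedral G \<rho> \<longleftrightarrow> 0 < \<rho> \<and>
     (\<exists>a\<in>dual_feasible. is_dual_min G a \<and> (\<forall>a'\<in>dual_feasible. G a \<le> G a' - \<rho> * norm (a - a')))"

definition close_est :: "('k::finite \<Rightarrow> real) \<Rightarrow> ('k \<Rightarrow> 'n \<Rightarrow> real \<Rightarrow> real)
    \<Rightarrow> ('k \<Rightarrow> ('n,'m) alloc \<Rightarrow> 'n \<Rightarrow> real) \<Rightarrow> ('k \<Rightarrow> ('n,'m) alloc set)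
    \<Rightarrow> real \<Rightarrow> real \<Rightarrow> ('k \<Rightarrow> real) \<Rightarrow> ('k \<Rightarrow> ('n,'m) alloc \<Rightarrow> 'n \<Rightarrow> real) \<Rightarrow> bool" where
  "close_est \<pi> r mu B dz dr pih rh \<longleftrightarrow>
     (\<forall>k. \<bar>pih k - \<pi> k\<bar> \<le> dz) \<and>
     (\<forall>k. \<forall>b\<in>B k. \<forall>n. \<bar>rh k b n - r k n (mu k b n)\<bar> \<le> dr)"

text \<open>Assumption 1 (Slater-type condition), with finite convex combinations of actions.\<close>
definition assumption1 :: "('k::finite \<Rightarrow> real) \<Rightarrow> ('k \<Rightarrow> real^'n::finite) \<Rightarrow> ('k \<Rightarrow> real^'m::finite)
    \<Rightarrow> ('k \<Rightarrow> ('n,'m) alloc set) \<Rightarrow> ('k \<Rightarrow> ('n,'m) alloc \<Rightarrow> 'n \<Rightarrow> real)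
    \<Rightarrow> ('k \<Rightarrow> 'n \<Rightarrow> real \<Rightarrow> real) \<Rightarrow> real \<Rightarrow> real \<Rightarrow> real \<Rightarrow> real \<Rightarrow> bool" where
  "assumption1 \<pi> A e B mu r rmax \<epsilon>z \<epsilon>r \<eta>0 \<longleftrightarrow> 0 < \<epsilon>z \<and> 0 < \<epsilon>r \<and> 0 < \<eta>0 \<and>
    (\<forall>pih rh. prob_vec pih \<and> close_est \<pi> r mu B \<epsilon>z \<epsilon>r pih rh \<longrightarrow>
      (\<exists>(\<gamma>::real^'n) (L::'k \<Rightarrow> nat) (Rs::'k \<Rightarrow> nat \<Rightarrow> real^'n) (bs::'k \<Rightarrow> nat \<Rightarrow> ('n,'m) alloc)
          (hs::'k \<Rightarrow> nat \<Rightarrow> real^'m) (lam::'k \<Rightarrow> nat \<Rightarrow> real).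
        (\<forall>n. 0 \<le> \<gamma>$n \<and> \<gamma>$n \<le> rmax) \<and>
        (\<forall>k. \<forall>i<L k. (\<forall>n. 0 \<le> Rs k i $ n \<and> Rs k i $ n \<le> A k $ n) \<and> bs k i \<in> B k \<and>
                     (\<forall>m. 0 \<le> hs k i $ m \<and> hs k i $ m \<le> e k $ m) \<and> 0 \<le> lam k i) \<and>
        (\<forall>k. (\<Sum>i<L k. lam k i) = 1) \<and>
        (\<forall>n. \<gamma>$n - (\<Sum>k\<in>UNIV. pih k * (\<Sum>i<L k. lam k i * rh k (bs k i) n)) \<le> - \<eta>0) \<and>
        (\<forall>n. (\<Sum>k\<in>UNIV. pih k * (\<Sum>i<L k. lam k i * Rs k i $ n))
             = (\<Sum>k\<in>UNIV. pih k * (\<Sum>i<L k. lam k i * mu k (bs k i) n))) \<and>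
        (\<forall>m. (\<Sum>k\<in>UNIV. pih k * (\<Sum>i<L k. lam k i * (\<Sum>n\<in>UNIV. bs k i $ m $ n)))
             = (\<Sum>k\<in>UNIV. pih k * (\<Sum>i<L k. lam k i * hs k i $ m))) \<and>
        (\<forall>n. 0 < (\<Sum>k\<in>UNIV. pih k * (\<Sum>i<L k. lam k i * Rs k i $ n)) \<and>
             (\<Sum>k\<in>UNIV. pih k * (\<Sum>i<L k. lam k i * Rs k i $ n)) < (\<Sum>k\<in>UNIV. pih k * A k $ n)) \<and>
        (\<forall>m. 0 < (\<Sum>k\<in>UNIV. pih k * (\<Sum>i<L k. lam k i * hs k i $ m)) \<and>
             (\<Sum>k\<in>UNIV. pih k * (\<Sum>i<L k. lam k i * hs k i $ m)) < (\<Sum>k\<in>UNIV. pih k * e k $ m))))"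

end

theory Submission
  imports Defs
begin

text \<open>
  If G has a sharp (polyhedral) minimum with parameter rho at a and H is minimized at b, then
  rho * norm (a - b) \<le> (G - H) b - (G - H) a.  Replacing the rewards by estimates within
  delta_r changes every dual function by at most delta_r * N * norm alpha; replacing the state
  distribution by one within delta_z changes it by the sum over k of (pih_k - pi_k) * g_k alpha,
  where abs (g_k alpha) \<le> V * fmax + L * norm alpha.  Minimizers satisfy rho * norm a \<le> V * fmax,
  since g 0 \<le> V * (\<Sum>n. U_n rmax) while g (2 a) \<le> 2 g a + V * cmax keeps the minimum above
  - V * cmax.  Finally g_V alpha = V * g_1 (alpha / V), so the admissible sharpness parameters
  do not depend on V; half the supremum of those of g_1 is itself one, within a factor 2 of any
  other, and by Assumption 2 it serves for the estimated dual functions as well.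
\<close>

lemma concave_on_atLeast_diff_le_deriv:
  fixes f :: "real \<Rightarrow> real"
  assumes conc: "concave_on {a..} f" and D: "(f has_real_derivative D) (at a within {a..})"
    and x: "a < x"
  shows "f x - f a \<le> D * (x - a)"
proof -
  have cv: "convex_on {a..} (\<lambda>y. - f y)" using conc by (simp add: concave_on_def)
  have "((\<lambda>y. (f y - f a) / (y - a)) \<longlongrightarrow> D) (at a within {a..})"
    using D by (simp add: has_field_derivative_iff)
  then have lim: "((\<lambda>y. (f y - f a) / (y - a)) \<longlongrightarrow> D) (at_right a)"
    by (rule tendsto_within_subset) auto
  have "\<forall>\<^sub>F y in at_right a. (f x - f a) / (x - a) \<le> (f y - f a) / (y - a)"
    using eventually_at_right_real[OF x]
  proof eventually_elim
    fix y assume y: "y \<in> {a<..<x}"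
    with convex_on_slope_le(1)[OF cv, of a x y]
    have "(- f a - - f y) / (a - y) \<le> (- f a - - f x) / (a - x)" by auto
    then show "(f x - f a) / (x - a) \<le> (f y - f a) / (y - a)"
      using y by (simp add: divide_simps) argo
  qed
  then have "(f x - f a) / (x - a) \<le> D" by (rule tendsto_lowerbound[OF lim]) simp
  then show ?thesis using x by (simp add: divide_le_eq mult.commute)
qed

lemma concave_on_atLeast_deriv_le_diff:
  fixes f :: "real \<Rightarrow> real"
  assumes conc: "concave_on {a..} f" and D: "(f has_real_derivative D) (at x within {a..})"
    and x: "a < x"
  shows "D * (x - a) \<le> f x - f a"
proof -
  have "convex_on {a..} (\<lambda>y. - f y)" using conc by (simp add: concave_on_def)
  moreover have "((\<lambda>y. - f y) has_real_derivative - D) (at x within {a..})"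
    using D by (rule derivative_intros)
  ultimately have "- D * (a - x) \<le> - f a - - f x"
    using x by (intro convex_on_imp_above_tangent) auto
  then show ?thesis by (simp add: algebra_simps)
qed

lemma cSUP_mult_left:
  fixes f :: "'a \<Rightarrow> real"
  assumes "A \<noteq> {}" "bdd_above (f ` A)" "0 < c"
  shows "(SUP x\<in>A. c * f x) = c * (SUP x\<in>A. f x)"
proof (rule antisym)
  show "(SUP x\<in>A. c * f x) \<le> c * (SUP x\<in>A. f x)"
    using assms by (intro cSUP_least) (auto intro: cSUP_upper)
  have "bdd_above ((\<lambda>x. c * f x) ` A)"
    using bdd_above_image_mono[OF _ assms(2), of "\<lambda>y. c * y"] assms(3)
    by (simp add: mono_def image_image)
  then have "(SUP x\<in>A. f x) \<le> (SUP x\<in>A. c * f x) / c"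
    using assms by (intro cSUP_least) (auto simp: le_divide_eq mult.commute intro: cSUP_upper)
  then show "c * (SUP x\<in>A. f x) \<le> (SUP x\<in>A. c * f x)"
    using assms(3) by (simp add: le_divide_eq mult.commute)
qed

lemma cSUP_le_cSUP_plus:
  fixes f g :: "'a \<Rightarrow> real"
  assumes "A \<noteq> {}" "bdd_above (g ` A)" "\<And>x. x \<in> A \<Longrightarrow> f x \<le> g x + d"
  shows "(SUP x\<in>A. f x) \<le> (SUP x\<in>A. g x) + d"
proof (rule cSUP_least[OF assms(1)])
  fix x assume "x \<in> A"
  then show "f x \<le> (SUP x\<in>A. g x) + d"
    using assms(3) cSUP_upper[OF _ assms(2)] by (meson add_right_mono order_trans)
qed

lemma abs_cSUP_le:
  fixes f :: "'a \<Rightarrow> real"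
  assumes "A \<noteq> {}" "\<And>x. x \<in> A \<Longrightarrow> \<bar>f x\<bar> \<le> K"
  shows "\<bar>SUP x\<in>A. f x\<bar> \<le> K"
proof -
  have bdd: "bdd_above (f ` A)" using assms(2) by (auto intro!: bdd_aboveI2 dest: abs_le_D1)
  obtain x where x: "x \<in> A" using assms(1) by blast
  have "(SUP x\<in>A. f x) \<le> K" using assms by (intro cSUP_least) (auto dest: abs_le_D1)
  moreover have "f x \<le> (SUP x\<in>A. f x)" by (rule cSUP_upper[OF x bdd])
  moreover have "- K \<le> f x" using assms(2)[OF x] by linarith
  ultimately show ?thesis by linarith
qed

lemma abs_sum_vec_mult_le:
  fixes v :: "real^'n::finite"
  assumes "norm v \<le> w" "\<And>i. \<bar>t i\<bar> \<le> K"
  shows "\<bar>\<Sum>i\<in>UNIV. v$i * t i\<bar> \<le> real CARD('n) * w * K"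
proof -
  have "\<bar>\<Sum>i\<in>UNIV. v$i * t i\<bar> \<le> (\<Sum>i\<in>UNIV. \<bar>v$i\<bar> * \<bar>t i\<bar>)"
    unfolding abs_mult[symmetric] by (rule sum_abs)
  also have "\<dots> \<le> (\<Sum>i\<in>(UNIV::'n set). w * K)"
  proof (rule sum_mono)
    fix i
    show "\<bar>v$i\<bar> * \<bar>t i\<bar> \<le> w * K"
      using assms component_le_norm_cart[of v i] by (intro mult_mono) auto
  qed
  finally show ?thesis by simp
qed

lemma weighted_sum_le_plus:
  assumes "prob_vec p" "\<And>k. f k \<le> g k + d"
  shows "(\<Sum>k\<in>UNIV. p k * f k) \<le> (\<Sum>k\<in>UNIV. p k * g k) + d"
proof -
  have "(\<Sum>k\<in>UNIV. p k * f k) \<le> (\<Sum>k\<in>UNIV. p k * (g k + d))"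
    using assms by (intro sum_mono mult_left_mono) (auto simp: prob_vec_def)
  also have "\<dots> = (\<Sum>k\<in>UNIV. p k * g k) + d"
    using assms(1) by (simp add: prob_vec_def distrib_left sum.distrib flip: sum_distrib_right)
  finally show ?thesis .
qed

lemma norm_le_norm_dualvar:
  fixes ad aq :: "real^'n::finite" and ah :: "real^'m::finite"
  shows "norm ad \<le> norm (ad, aq, ah)" "norm aq \<le> norm (ad, aq, ah)" "norm ah \<le> norm (ad, aq, ah)"
  by (meson norm_fst_le norm_snd_le order_trans)+

lemma abs_diff_diff_diff_le:
  fixes a b c d :: real
  shows "\<bar>a\<bar> \<le> A \<Longrightarrow> \<bar>b\<bar> \<le> B \<Longrightarrow> \<bar>c\<bar> \<le> C \<Longrightarrow> \<bar>d\<bar> \<le> D \<Longrightarrow> \<bar>a - b - c - d\<bar> \<le> A + B + C + D"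
  by linarith

lemma close_est_mono:
  "close_est \<pi> r mu B dz dr p rh \<Longrightarrow> dz \<le> dz' \<Longrightarrow> dr \<le> dr' \<Longrightarrow> close_est \<pi> r mu B dz' dr' p rh"
  unfolding close_est_def by (meson order_trans)

section \<open>Sharp minima\<close>

lemma polyhedral_sharp_min:
  assumes P: "polyhedral G \<rho>" and a: "is_dual_min G a" and a': "a' \<in> dual_feasible"
  shows "G a \<le> G a' - \<rho> * norm (a - a')"
proof -
  obtain a0 where a0: "is_dual_min G a0" "\<forall>a'\<in>dual_feasible. G a0 \<le> G a' - \<rho> * norm (a0 - a')"
    and "0 < \<rho>"
    using P unfolding polyhedral_def by blast
  have "G a0 = G a" and "G a0 \<le> G a - \<rho> * norm (a0 - a)"
    using a a0 unfolding is_dual_min_def by (auto intro: antisym)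
  with \<open>0 < \<rho>\<close> have "a0 = a" by (simp add: mult_le_0_iff)
  with a0(2) a' show ?thesis by blast
qed

lemma polyhedral_min_dist_le:
  assumes "polyhedral G \<rho>" "is_dual_min G a" "is_dual_min H b"
  shows "\<rho> * norm (a - b) \<le> (G b - H b) - (G a - H a)"
proof -
  have "G a \<le> G b - \<rho> * norm (a - b)"
    using assms by (intro polyhedral_sharp_min) (auto simp: is_dual_min_def)
  moreover have "H b \<le> H a" using assms(2,3) by (simp add: is_dual_min_def)
  ultimately show ?thesis by linarith
qed

lemma polyhedral_mono_param:
  assumes "polyhedral G \<rho>" "0 < \<rho>'" "\<rho>' \<le> \<rho>"
  shows "polyhedral G \<rho>'"
proof -
  have "\<rho>' * norm (a - a') \<le> \<rho> * norm (a - a')" for a a' :: "('a,'b) dualvar"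
    using assms(3) by (simp add: mult_right_mono)
  then show ?thesis
    using assms unfolding polyhedral_def by (smt (verit))
qed

lemma scaleR_dual_feasible_iff: "0 < t \<Longrightarrow> t *\<^sub>R a \<in> dual_feasible \<longleftrightarrow> a \<in> dual_feasible"
  by (cases a) (auto simp: dual_feasible_def zero_le_mult_iff)

lemma polyhedral_rescale:
  fixes F H :: "('n::finite,'m::finite) dualvar \<Rightarrow> real"
  assumes F: "\<And>\<alpha>. F \<alpha> = V * H ((1/V) *\<^sub>R \<alpha>)" and V: "0 < V" and P: "polyhedral H \<rho>"
  shows "polyhedral F \<rho>"
proof -
  obtain a where a: "is_dual_min H a" "\<forall>a'\<in>dual_feasible. H a \<le> H a' - \<rho> * norm (a - a')"
    and "0 < \<rho>"
    using P unfolding polyhedral_def by blast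
  have Va: "V *\<^sub>R a \<in> dual_feasible"
    using a(1) V by (simp add: is_dual_min_def scaleR_dual_feasible_iff)
  have sharp: "F (V *\<^sub>R a) \<le> F b - \<rho> * norm (V *\<^sub>R a - b)" if b: "b \<in> dual_feasible" for b
  proof -
    have "H a \<le> H ((1/V) *\<^sub>R b) - \<rho> * norm (a - (1/V) *\<^sub>R b)"
      using a(2) b V by (simp add: scaleR_dual_feasible_iff)
    then have "V * (H a + \<rho> * norm (a - (1/V) *\<^sub>R b)) \<le> V * H ((1/V) *\<^sub>R b)"
      using V by (intro mult_left_mono) auto
    then have "V * H a \<le> V * H ((1/V) *\<^sub>R b) - \<rho> * (V * norm (a - (1/V) *\<^sub>R b))"
      by (simp add: algebra_simps)
    moreover have "V * norm (a - (1/V) *\<^sub>R b) = norm (V *\<^sub>R a - b)"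
    proof -
      have "V *\<^sub>R a - b = V *\<^sub>R (a - (1/V) *\<^sub>R b)" using V by (simp add: algebra_simps)
      then show ?thesis using V by simp
    qed
    ultimately show ?thesis using F V by simp
  qed
  then have "is_dual_min F (V *\<^sub>R a)"
    using Va \<open>0 < \<rho>\<close> unfolding is_dual_min_def
    by (smt (verit, best) mult_nonneg_nonneg norm_ge_zero)
  with sharp Va \<open>0 < \<rho>\<close> show ?thesis unfolding polyhedral_def by blast
qed

text \<open>The final arithmetic step, used with kappa = 1 for the distribution error and
  kappa = 0 for the reward error.\<close>
lemma sharp_min_distance_bound:
  fixes D W \<delta> \<kappa> L x y \<rho> \<rho>' \<eta> :: real
  assumes D: "\<rho>' * D \<le> \<delta> * (2 * \<kappa> * W + L * (x + y))"
    and x: "\<rho>' * x \<le> W" and y: "\<rho>' * y \<le> W"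
    and \<rho>: "0 < \<rho>" "\<rho> \<le> 2 * \<rho>'" and nonneg: "0 \<le> \<delta>" "0 \<le> x" "0 \<le> L"
    and \<eta>: "0 < \<eta>" "\<kappa> + L / \<rho>' \<le> 1 / (2 * \<eta>)"
  shows "D \<le> 2 * \<delta> * W / (\<rho> * \<eta>)"
proof -
  have "0 < \<rho>'" using \<rho> by linarith
  have "0 \<le> W" using x nonneg(2) \<open>0 < \<rho>'\<close> by (meson mult_nonneg_nonneg less_imp_le order_trans)
  have xy: "L * (x + y) \<le> L * (2 * W / \<rho>')"
    using x y \<open>0 < \<rho>'\<close> nonneg by (intro mult_left_mono) (auto simp: field_simps)
  then have "\<rho>' * D \<le> 2 * \<delta> * W * (\<kappa> + L / \<rho>')"
    using D mult_left_mono[OF xy \<open>0 \<le> \<delta>\<close>] by (simp add: algebra_simps)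
  also have "\<dots> \<le> 2 * \<delta> * W * (1 / (2 * \<eta>))"
    using \<eta> nonneg \<open>0 \<le> W\<close> by (intro mult_left_mono) auto
  finally have "D \<le> \<delta> * W / \<eta> * (1 / \<rho>')"
    using \<open>0 < \<rho>'\<close> \<eta> by (simp add: field_simps)
  also have "\<dots> \<le> \<delta> * W / \<eta> * (2 / \<rho>)"
    using \<rho> \<eta> nonneg \<open>0 \<le> W\<close> \<open>0 < \<rho>'\<close> by (intro mult_left_mono) (auto simp: field_simps)
  finally show ?thesis by (simp add: field_simps)
qed

section \<open>The per-state Lagrangian\<close>

definition lagrangian :: "real \<Rightarrow> ('n::finite \<Rightarrow> real \<Rightarrow> real) \<Rightarrow> (('n,'m::finite) alloc \<Rightarrow> real)
    \<Rightarrow> (('n,'m) alloc \<Rightarrow> 'n \<Rightarrow> real) \<Rightarrow> (('n,'m) alloc \<Rightarrow> 'n \<Rightarrow> real) \<Rightarrow> ('n,'m) dualvar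
    \<Rightarrow> (real^'n) \<times> (real^'n) \<times> ('n,'m) alloc \<times> (real^'m) \<Rightarrow> real" where
  "lagrangian V U c rho mu \<alpha> x = (case \<alpha> of (ad, aq, ah) \<Rightarrow> case x of (\<gamma>, R, b, h) \<Rightarrow>
     V * ((\<Sum>n\<in>UNIV. U n (\<gamma>$n)) - c b)
     - (\<Sum>n\<in>UNIV. ad$n * (rho b n - \<gamma>$n))
     - (\<Sum>n\<in>UNIV. aq$n * (R$n - mu b n))
     - (\<Sum>m\<in>UNIV. ah$m * ((\<Sum>n\<in>UNIV. b$m$n) - h$m)))"

definition actions :: "real \<Rightarrow> real^'n::finite \<Rightarrow> real^'m::finite \<Rightarrow> ('n,'m) alloc set
    \<Rightarrow> ((real^'n) \<times> (real^'n) \<times> ('n,'m) alloc \<times> (real^'m)) set" where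
  "actions rmax Ak ek Bk = {(\<gamma>, R, b, h). (\<forall>n. 0 \<le> \<gamma>$n \<and> \<gamma>$n \<le> rmax)
     \<and> (\<forall>n. 0 \<le> R$n \<and> R$n \<le> Ak$n) \<and> b \<in> Bk \<and> (\<forall>m. 0 \<le> h$m \<and> h$m \<le> ek$m)}"

lemma gk_eq_SUP_lagrangian:
  "gk V U rmax c rho mu Ak ek Bk \<alpha> = (SUP x\<in>actions rmax Ak ek Bk. lagrangian V U c rho mu \<alpha> x)"
  unfolding gk_def lagrangian_def actions_def
  by (cases \<alpha>) (simp only: prod.case, rule arg_cong[where f=Sup], auto simp: image_def)

lemma lagrangian_scale:
  assumes "V \<noteq> 0"
  shows "lagrangian V U c rho mu \<alpha> x = V * lagrangian 1 U c rho mu ((1/V) *\<^sub>R \<alpha>) x"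
  using assms by (cases \<alpha>; cases x) (simp add: lagrangian_def sum_distrib_left algebra_simps)

lemma lagrangian_scaleR_2:
  "lagrangian V U c rho mu (2 *\<^sub>R \<alpha>) (\<gamma>, R, b, h)
     = 2 * lagrangian V U c rho mu \<alpha> (\<gamma>, R, b, h) - V * ((\<Sum>n\<in>UNIV. U n (\<gamma>$n)) - c b)"
  by (cases \<alpha>) (simp add: lagrangian_def sum_distrib_left algebra_simps)

lemma lagrangian_reward_diff:
  "lagrangian V U c rho mu (ad, aq, ah) (\<gamma>, R, b, h) - lagrangian V U c rho' mu (ad, aq, ah) (\<gamma>, R, b, h)
     = (\<Sum>n\<in>UNIV. ad$n * (rho' b n - rho b n))"
  by (simp add: lagrangian_def sum_subtractf[symmetric] algebra_simps)

lemma lagrangian_add_axis: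
  "lagrangian V U c rho mu ((ad, aq, ah) + (axis i 1, 0, 0)) (\<gamma>, R, b, h)
     = lagrangian V U c rho mu (ad, aq, ah) (\<gamma>, R, b, h) - (rho b i - \<gamma>$i)"
proof -
  have "(\<Sum>n\<in>UNIV. axis i 1 $ n * (rho b n - \<gamma>$n)) = rho b i - \<gamma>$i"
    by (simp add: axis_def of_bool_def[symmetric])
  then show ?thesis
    by (simp add: lagrangian_def distrib_right sum.distrib)
qed

lemma dual_fun_diff_weights:
  "dual_fun V U rmax c rho mu A e B p \<alpha> - dual_fun V U rmax c rho mu A e B q \<alpha>
     = (\<Sum>k\<in>UNIV. (p k - q k) * gk V U rmax (c k) (rho k) (mu k) (A k) (e k) (B k) \<alpha>)"
  unfolding dual_fun_def by (simp add: sum_subtractf[symmetric] left_diff_distrib)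

section \<open>Bounds on the dual functions\<close>

locale resource_system =
  fixes \<pi> :: "'k::finite \<Rightarrow> real"
    and A :: "'k \<Rightarrow> real^'n::finite" and e :: "'k \<Rightarrow> real^'m::finite"
    and B :: "'k \<Rightarrow> ('n,'m) alloc set"
    and mu :: "'k \<Rightarrow> ('n,'m) alloc \<Rightarrow> 'n \<Rightarrow> real"
    and c :: "'k \<Rightarrow> ('n,'m) alloc \<Rightarrow> real"
    and r :: "'k \<Rightarrow> 'n \<Rightarrow> real \<Rightarrow> real"
    and U U' :: "'n \<Rightarrow> real \<Rightarrow> real"
    and Amax hmax bmax mumax cmax rmax \<beta> \<epsilon>z \<epsilon>r \<eta>0 :: real
  assumes pi_prob: "prob_vec \<pi>"
    and A_bd: "\<forall>k n. 0 \<le> A k $ n \<and> A k $ n \<le> Amax"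
    and e_bd: "\<forall>k m. 0 \<le> e k $ m \<and> e k $ m \<le> hmax"
    and B_fin: "\<forall>k. finite (B k)"
    and B_nonneg: "\<forall>k. \<forall>b\<in>B k. \<forall>m n. 0 \<le> b $ m $ n"
    and bmax_def: "bmax = Max {b $ m $ n | k b m n. b \<in> B k}"
    and mu_bd: "\<forall>k. \<forall>b\<in>B k. \<forall>n. 0 \<le> mu k b n \<and> mu k b n \<le> mumax"
    and c_bd: "\<forall>k. \<forall>b\<in>B k. 0 \<le> c k b \<and> c k b \<le> cmax"
    and r_bd: "\<forall>k n x. 0 \<le> r k n x \<and> r k n x \<le> rmax"
    and U_incr: "\<forall>n. strict_mono_on {0..} (U n)"
    and U_conc: "\<forall>n. concave_on {0..} (U n)"
    and U_0: "\<forall>n. U n 0 = 0"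
    and U_deriv: "\<forall>n. \<forall>x\<ge>0. (U n has_real_derivative U' n x) (at x within {0..})"
    and beta_def: "\<beta> = Sup {U' n x | n x. 0 \<le> x}"
    and ass1: "assumption1 \<pi> A e B mu r rmax \<epsilon>z \<epsilon>r \<eta>0"
begin

abbreviation actions_at :: "'k \<Rightarrow> ((real^'n) \<times> (real^'n) \<times> ('n,'m) alloc \<times> (real^'m)) set" where
  "actions_at k \<equiv> actions rmax (A k) (e k) (B k)"

abbreviation state_dual :: "real \<Rightarrow> ('k \<Rightarrow> ('n,'m) alloc \<Rightarrow> 'n \<Rightarrow> real) \<Rightarrow> 'k \<Rightarrow> ('n,'m) dualvar \<Rightarrow> real" where
  "state_dual V rho k \<equiv> gk V U rmax (c k) (rho k) (mu k) (A k) (e k) (B k)"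

abbreviation dual :: "real \<Rightarrow> ('k \<Rightarrow> ('n,'m) alloc \<Rightarrow> 'n \<Rightarrow> real) \<Rightarrow> ('k \<Rightarrow> real) \<Rightarrow> ('n,'m) dualvar \<Rightarrow> real" where
  "dual V rho p \<equiv> dual_fun V U rmax c rho mu A e B p"

lemma eps_pos: "0 < \<epsilon>z" "0 < \<epsilon>r" "0 < \<eta>0"
  using ass1 unfolding assumption1_def by auto

text \<open>Assumption 1 is used only here: its convex combinations of actions need some
  allocation in every B k.\<close>
lemma B_nonempty: "B k \<noteq> {}"
proof -
  have "close_est \<pi> r mu B \<epsilon>z \<epsilon>r \<pi> (true_table r mu)"
    using eps_pos by (simp add: close_est_def true_table_def)
  with ass1 pi_prob have "\<exists>(L::'k \<Rightarrow> nat) (bs::'k \<Rightarrow> nat \<Rightarrow> ('n,'m) alloc) (lam::'k \<Rightarrow> nat \<Rightarrow> real).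
      (\<forall>k. \<forall>i<L k. bs k i \<in> B k) \<and> (\<forall>k. (\<Sum>i<L k. lam k i) = 1)"
    unfolding assumption1_def by (smt (verit))
  then obtain L :: "'k \<Rightarrow> nat" and bs :: "'k \<Rightarrow> nat \<Rightarrow> ('n,'m) alloc" and lam :: "'k \<Rightarrow> nat \<Rightarrow> real"
    where "\<forall>k. \<forall>i<L k. bs k i \<in> B k" "\<forall>k. (\<Sum>i<L k. lam k i) = 1"
    by blast
  moreover from this(2) have "L k \<noteq> 0" by (metis lessThan_0 sum.empty zero_neq_one)
  ultimately show ?thesis by blast
qed

lemma rmax_nonneg: "0 \<le> rmax" using r_bd by (meson order_trans)
lemma Amax_nonneg: "0 \<le> Amax" using A_bd by (meson order_trans)
lemma hmax_nonneg: "0 \<le> hmax" using e_bd by (meson order_trans)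
lemma mumax_nonneg: "0 \<le> mumax" using mu_bd B_nonempty by (meson all_not_in_conv order_trans)

lemma entry_le_bmax:
  assumes "b \<in> B k" shows "b $ m $ n \<le> bmax"
proof -
  have "{b $ m $ n | k b m n. b \<in> B k} \<subseteq> (\<lambda>(b, m, n). b $ m $ n) ` ((\<Union>k. B k) \<times> UNIV \<times> UNIV)"
    by (auto simp: image_def)
  moreover have "finite ((\<Union>k. B k) \<times> (UNIV::'m set) \<times> (UNIV::'n set))" using B_fin by simp
  ultimately have "finite {b $ m $ n | k b m n. b \<in> B k}" by (meson finite_imageI finite_subset)
  then show ?thesis unfolding bmax_def by (rule Max_ge) (use assms in blast)
qed

lemma bmax_nonneg: "0 \<le> bmax"
  using B_nonempty B_nonneg entry_le_bmax by (meson all_not_in_conv order_trans)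

lemma U_nonneg: "0 \<le> x \<Longrightarrow> 0 \<le> U n x"
  using U_incr U_0 by (metis atLeast_iff order_le_less strict_mono_onD)

lemma U_mono: "0 \<le> x \<Longrightarrow> x \<le> y \<Longrightarrow> U n x \<le> U n y"
  using U_incr by (metis atLeast_iff order_le_less strict_mono_onD order_trans)

lemma U'_le_U'_0: "0 \<le> x \<Longrightarrow> U' n x \<le> U' n 0"
proof (cases "x = 0")
  case False
  assume "0 \<le> x"
  with False have "0 < x" by simp
  have "U' n x * (x - 0) \<le> U n x - U n 0"
    using U_conc U_deriv \<open>0 < x\<close> by (intro concave_on_atLeast_deriv_le_diff) auto
  also have "\<dots> \<le> U' n 0 * (x - 0)"
    using U_conc U_deriv \<open>0 < x\<close> by (intro concave_on_atLeast_diff_le_deriv) auto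
  finally show ?thesis using \<open>0 < x\<close> by simp
qed simp

lemma U'_0_le_beta: "U' n 0 \<le> \<beta>"
proof -
  have "bdd_above {U' n x | n x. 0 \<le> x}"
  proof (rule bdd_aboveI)
    fix y assume "y \<in> {U' n x | n x. 0 \<le> x}"
    then obtain n x where "y = U' n x" "0 \<le> x" by blast
    then have "y \<le> U' n 0" using U'_le_U'_0 by blast
    also have "\<dots> \<le> \<bar>U' n 0\<bar>" by simp
    also have "\<dots> \<le> (\<Sum>n\<in>UNIV. \<bar>U' n 0\<bar>)" by (rule member_le_sum) auto
    finally show "y \<le> (\<Sum>n\<in>UNIV. \<bar>U' n 0\<bar>)" .
  qed
  then show ?thesis unfolding beta_def by (rule cSup_upper[rotated]) blast
qed

definition utility_max :: real where
  "utility_max = (\<Sum>n\<in>UNIV. U n rmax)"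

lemma utility_max_le: "utility_max \<le> real CARD('n) * \<beta> * rmax"
proof -
  have "U n rmax \<le> \<beta> * rmax" for n
  proof (cases "rmax = 0")
    case False
    then have "0 < rmax" using rmax_nonneg by simp
    then have "U n rmax - U n 0 \<le> U' n 0 * (rmax - 0)"
      using U_conc U_deriv by (intro concave_on_atLeast_diff_le_deriv) auto
    also have "\<dots> \<le> \<beta> * rmax" using U'_0_le_beta rmax_nonneg by (simp add: mult_right_mono)
    finally show ?thesis using U_0 by simp
  qed (use U_0 in simp)
  then have "utility_max \<le> (\<Sum>n\<in>(UNIV::'n set). \<beta> * rmax)"
    unfolding utility_max_def by (rule sum_mono)
  then show ?thesis by simp
qed

lemma sum_utility_bounds:
  assumes "\<forall>n. 0 \<le> \<gamma>$n \<and> \<gamma>$n \<le> rmax"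
  shows "0 \<le> (\<Sum>n\<in>UNIV. U n (\<gamma>$n))" "(\<Sum>n\<in>UNIV. U n (\<gamma>$n)) \<le> utility_max"
  using assms unfolding utility_max_def by (auto intro: sum_nonneg sum_mono U_nonneg U_mono)

lemma utility_max_nonneg: "0 \<le> utility_max"
  unfolding utility_max_def using rmax_nonneg by (simp add: sum_nonneg U_nonneg)

lemma cmax_nonneg: "0 \<le> cmax" using c_bd B_nonempty by (meson all_not_in_conv order_trans)

definition reward_bounded :: "real \<Rightarrow> ('k \<Rightarrow> ('n,'m) alloc \<Rightarrow> 'n \<Rightarrow> real) \<Rightarrow> bool" where
  "reward_bounded C rho \<longleftrightarrow> (\<forall>k. \<forall>b\<in>B k. \<forall>n. \<bar>rho k b n\<bar> \<le> C)"

lemma reward_bounded_nonneg: "reward_bounded C rho \<Longrightarrow> 0 \<le> C"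
  using B_nonempty unfolding reward_bounded_def by (meson abs_ge_zero all_not_in_conv order_trans)

lemma true_table_reward_bounded: "0 \<le> \<epsilon> \<Longrightarrow> reward_bounded (rmax + \<epsilon>) (true_table r mu)"
  using r_bd unfolding reward_bounded_def true_table_def by (smt (verit))

lemma estimate_reward_bounded:
  assumes "close_est \<pi> r mu B dz dr p rh" "dr \<le> \<epsilon>"
  shows "reward_bounded (rmax + \<epsilon>) rh"
  unfolding reward_bounded_def
proof (intro allI ballI)
  fix k b n assume "b \<in> B k"
  then have "\<bar>rh k b n - r k n (mu k b n)\<bar> \<le> dr" using assms(1) by (simp add: close_est_def)
  moreover have "0 \<le> r k n (mu k b n)" "r k n (mu k b n) \<le> rmax" using r_bd by auto
  ultimately show "\<bar>rh k b n\<bar> \<le> rmax + \<epsilon>" using assms(2) unfolding abs_le_iff by linarith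
qed

lemma actions_at_nonempty: "actions_at k \<noteq> {}"
proof -
  obtain b where "b \<in> B k" using B_nonempty by blast
  then have "(0, 0, b, 0) \<in> actions_at k" using rmax_nonneg A_bd e_bd by (simp add: actions_def)
  then show ?thesis by blast
qed

lemma lagrangian_abs_le:
  assumes rho: "reward_bounded C rho" and V: "0 \<le> V" and x: "x \<in> actions_at k"
  shows "\<bar>lagrangian V U (c k) (rho k) (mu k) \<alpha> x\<bar> \<le> V * (utility_max + cmax)
     + (real CARD('n) * (C + rmax + Amax + mumax) + real CARD('m) * (real CARD('n) * bmax + hmax)) * norm \<alpha>"
proof -
  obtain ad aq ah where \<alpha>: "\<alpha> = (ad, aq, ah)" by (cases \<alpha>)
  obtain \<gamma> R b h where x_eq: "x = (\<gamma>, R, b, h)" by (cases x)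
  from x have \<gamma>: "\<forall>n. 0 \<le> \<gamma>$n \<and> \<gamma>$n \<le> rmax" and R: "\<forall>n. 0 \<le> R$n \<and> R$n \<le> A k $ n"
    and b: "b \<in> B k" and h: "\<forall>m. 0 \<le> h$m \<and> h$m \<le> e k $ m"
    by (auto simp: actions_def x_eq)
  let ?N = "real CARD('n)" and ?M = "real CARD('m)"
  have "0 \<le> c k b" "c k b \<le> cmax" using c_bd b by auto
  then have "\<bar>(\<Sum>n\<in>UNIV. U n (\<gamma>$n)) - c k b\<bar> \<le> utility_max + cmax"
    using sum_utility_bounds[OF \<gamma>] unfolding abs_le_iff by linarith
  then have t1: "\<bar>V * ((\<Sum>n\<in>UNIV. U n (\<gamma>$n)) - c k b)\<bar> \<le> V * (utility_max + cmax)"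
    using V by (simp add: abs_mult mult_left_mono)
  have t2: "\<bar>\<Sum>n\<in>UNIV. ad$n * (rho k b n - \<gamma>$n)\<bar> \<le> ?N * norm \<alpha> * (C + rmax)"
  proof (rule abs_sum_vec_mult_le[OF norm_le_norm_dualvar(1)[of ad aq ah, folded \<alpha>]])
    fix n
    have "\<bar>rho k b n\<bar> \<le> C" using rho b unfolding reward_bounded_def by blast
    then show "\<bar>rho k b n - \<gamma>$n\<bar> \<le> C + rmax"
      using \<gamma>[rule_format, of n] unfolding abs_le_iff by linarith
  qed
  have t3: "\<bar>\<Sum>n\<in>UNIV. aq$n * (R$n - mu k b n)\<bar> \<le> ?N * norm \<alpha> * (Amax + mumax)"
  proof (rule abs_sum_vec_mult_le[OF norm_le_norm_dualvar(2)[of aq ad ah, folded \<alpha>]])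
    fix n
    have "0 \<le> R$n" "R$n \<le> Amax" "0 \<le> mu k b n" "mu k b n \<le> mumax"
      using R A_bd mu_bd b by (auto intro: order_trans)
    then show "\<bar>R$n - mu k b n\<bar> \<le> Amax + mumax" unfolding abs_le_iff by linarith
  qed
  have t4: "\<bar>\<Sum>m\<in>UNIV. ah$m * ((\<Sum>n\<in>UNIV. b$m$n) - h$m)\<bar> \<le> ?M * norm \<alpha> * (?N * bmax + hmax)"
  proof (rule abs_sum_vec_mult_le[OF norm_le_norm_dualvar(3)[of ah ad aq, folded \<alpha>]])
    fix m
    have "0 \<le> (\<Sum>n\<in>UNIV. b$m$n)" using B_nonneg b by (simp add: sum_nonneg)
    moreover have "(\<Sum>n\<in>UNIV. b$m$n) \<le> ?N * bmax"
      using sum_bounded_above[of UNIV "\<lambda>n. b$m$n" bmax] entry_le_bmax[OF b] by simp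
    moreover have "0 \<le> h$m" "h$m \<le> hmax" using h e_bd by (auto intro: order_trans)
    ultimately show "\<bar>(\<Sum>n\<in>UNIV. b$m$n) - h$m\<bar> \<le> ?N * bmax + hmax"
      unfolding abs_le_iff by linarith
  qed
  have "lagrangian V U (c k) (rho k) (mu k) \<alpha> x = V * ((\<Sum>n\<in>UNIV. U n (\<gamma>$n)) - c k b)
      - (\<Sum>n\<in>UNIV. ad$n * (rho k b n - \<gamma>$n)) - (\<Sum>n\<in>UNIV. aq$n * (R$n - mu k b n))
      - (\<Sum>m\<in>UNIV. ah$m * ((\<Sum>n\<in>UNIV. b$m$n) - h$m))"
    by (simp add: \<alpha> x_eq lagrangian_def)
  also have "\<bar>\<dots>\<bar> \<le> V * (utility_max + cmax) + ?N * norm \<alpha> * (C + rmax)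
      + ?N * norm \<alpha> * (Amax + mumax) + ?M * norm \<alpha> * (?N * bmax + hmax)"
    by (rule abs_diff_diff_diff_le[OF t1 t2 t3 t4])
  finally show ?thesis by (simp add: algebra_simps)
qed

lemma bdd_above_lagrangian:
  assumes "reward_bounded C rho" "0 \<le> V"
  shows "bdd_above (lagrangian V U (c k) (rho k) (mu k) \<alpha> ` actions_at k)"
  by (rule bdd_aboveI2) (rule abs_le_D1[OF lagrangian_abs_le[OF assms]])

lemma state_dual_abs_le:
  assumes "reward_bounded C rho" "0 \<le> V"
  shows "\<bar>state_dual V rho k \<alpha>\<bar> \<le> V * (utility_max + cmax)
     + (real CARD('n) * (C + rmax + Amax + mumax) + real CARD('m) * (real CARD('n) * bmax + hmax)) * norm \<alpha>"
  unfolding gk_eq_SUP_lagrangian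
  by (rule abs_cSUP_le[OF actions_at_nonempty lagrangian_abs_le[OF assms]])

lemma state_dual_zero_le: "0 \<le> V \<Longrightarrow> state_dual V rho k 0 \<le> V * utility_max"
  unfolding gk_eq_SUP_lagrangian
proof (rule cSUP_least[OF actions_at_nonempty])
  fix x assume "0 \<le> V" "x \<in> actions_at k"
  moreover obtain \<gamma> R b h where x: "x = (\<gamma>, R, b, h)" by (cases x)
  ultimately have "(\<Sum>n\<in>UNIV. U n (\<gamma>$n)) - c k b \<le> utility_max"
    using sum_utility_bounds(2)[of \<gamma>] c_bd by (force simp: actions_def)
  with \<open>0 \<le> V\<close> show "lagrangian V U (c k) (rho k) (mu k) 0 x \<le> V * utility_max"
    by (simp add: x lagrangian_def zero_prod_def mult_left_mono)
qed

lemma state_dual_scaleR_2_le: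
  assumes rho: "reward_bounded C rho" and V: "0 \<le> V"
  shows "state_dual V rho k (2 *\<^sub>R \<alpha>) \<le> 2 * state_dual V rho k \<alpha> + V * cmax"
  unfolding gk_eq_SUP_lagrangian
proof (rule cSUP_least[OF actions_at_nonempty])
  fix x assume x: "x \<in> actions_at k"
  obtain \<gamma> R b h where x_eq: "x = (\<gamma>, R, b, h)" by (cases x)
  with x have "- cmax \<le> (\<Sum>n\<in>UNIV. U n (\<gamma>$n)) - c k b"
    using sum_utility_bounds(1)[of \<gamma>] c_bd by (force simp: actions_def)
  then have "- (V * ((\<Sum>n\<in>UNIV. U n (\<gamma>$n)) - c k b)) \<le> V * cmax"
    using V mult_left_mono by fastforce
  moreover have "lagrangian V U (c k) (rho k) (mu k) \<alpha> x
      \<le> (SUP x\<in>actions_at k. lagrangian V U (c k) (rho k) (mu k) \<alpha> x)"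
    by (rule cSUP_upper[OF x bdd_above_lagrangian[OF rho V]])
  ultimately show "lagrangian V U (c k) (rho k) (mu k) (2 *\<^sub>R \<alpha>) x
      \<le> 2 * (SUP x\<in>actions_at k. lagrangian V U (c k) (rho k) (mu k) \<alpha> x) + V * cmax"
    unfolding x_eq lagrangian_scaleR_2 by linarith
qed

lemma state_dual_le_reward_perturb:
  assumes rho': "reward_bounded C rho'" and V: "0 \<le> V"
    and close: "\<forall>k. \<forall>b\<in>B k. \<forall>n. \<bar>rho k b n - rho' k b n\<bar> \<le> \<delta>"
  shows "state_dual V rho k \<alpha> \<le> state_dual V rho' k \<alpha> + \<delta> * (real CARD('n) * norm \<alpha>)"
  unfolding gk_eq_SUP_lagrangian
proof (rule cSUP_le_cSUP_plus[OF actions_at_nonempty bdd_above_lagrangian[OF rho' V]])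
  fix x assume x: "x \<in> actions_at k"
  obtain ad aq ah where \<alpha>: "\<alpha> = (ad, aq, ah)" by (cases \<alpha>)
  obtain \<gamma> R b h where x_eq: "x = (\<gamma>, R, b, h)" by (cases x)
  have b: "b \<in> B k" using x by (simp add: x_eq actions_def)
  have "\<bar>\<Sum>n\<in>UNIV. ad$n * (rho' k b n - rho k b n)\<bar> \<le> real CARD('n) * norm \<alpha> * \<delta>"
    using close b by (intro abs_sum_vec_mult_le[OF norm_le_norm_dualvar(1)[of ad aq ah, folded \<alpha>]])
      (simp add: abs_minus_commute)
  then show "lagrangian V U (c k) (rho k) (mu k) \<alpha> x
      \<le> lagrangian V U (c k) (rho' k) (mu k) \<alpha> x + \<delta> * (real CARD('n) * norm \<alpha>)"
    using lagrangian_reward_diff[of V U "c k" "rho k" "mu k" ad aq ah \<gamma> R b h "rho' k"]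
    unfolding \<alpha> x_eq by (simp add: algebra_simps)
qed

lemma state_dual_add_axis_le:
  assumes rho: "reward_bounded C rho" and V: "0 \<le> V"
  shows "state_dual V rho k ((ad, aq, ah) + (axis i 1, 0, 0)) \<le> state_dual V rho k (ad, aq, ah) + (C + rmax)"
  unfolding gk_eq_SUP_lagrangian
proof (rule cSUP_le_cSUP_plus[OF actions_at_nonempty bdd_above_lagrangian[OF rho V]])
  fix x assume x: "x \<in> actions_at k"
  obtain \<gamma> R b h where x_eq: "x = (\<gamma>, R, b, h)" by (cases x)
  from x have "\<gamma>$i \<le> rmax" "\<bar>rho k b i\<bar> \<le> C"
    using rho by (auto simp: x_eq actions_def reward_bounded_def)
  then show "lagrangian V U (c k) (rho k) (mu k) ((ad, aq, ah) + (axis i 1, 0, 0)) x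
      \<le> lagrangian V U (c k) (rho k) (mu k) (ad, aq, ah) x + (C + rmax)"
    unfolding x_eq lagrangian_add_axis abs_le_iff by linarith
qed

lemma state_dual_scale:
  assumes rho: "reward_bounded C rho" and V: "0 < V"
  shows "state_dual V rho k \<alpha> = V * state_dual 1 rho k ((1/V) *\<^sub>R \<alpha>)"
  unfolding gk_eq_SUP_lagrangian lagrangian_scale[OF less_imp_neq[OF V, symmetric]]
  by (rule cSUP_mult_left[OF actions_at_nonempty bdd_above_lagrangian[OF rho] V]) simp

lemma dual_scale:
  assumes "reward_bounded C rho" "0 < V"
  shows "dual V rho p \<alpha> = V * dual 1 rho p ((1/V) *\<^sub>R \<alpha>)"
  unfolding dual_fun_def sum_distrib_left
  by (rule sum.cong[OF refl]) (simp only: state_dual_scale[OF assms] mult.left_commute)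

lemma polyhedral_dual_iff_unit:
  assumes rho: "reward_bounded C rho" and V: "0 < V"
  shows "polyhedral (dual V rho p) \<rho> \<longleftrightarrow> polyhedral (dual 1 rho p) \<rho>"
proof
  assume "polyhedral (dual 1 rho p) \<rho>"
  then show "polyhedral (dual V rho p) \<rho>"
    by (rule polyhedral_rescale[where F = "dual V rho p", OF dual_scale[OF rho V] V])
next
  assume P: "polyhedral (dual V rho p) \<rho>"
  have "dual 1 rho p \<alpha> = (1/V) * dual V rho p ((1/(1/V)) *\<^sub>R \<alpha>)" for \<alpha>
    using dual_scale[OF rho V, of p "V *\<^sub>R \<alpha>"] V by simp
  then show "polyhedral (dual 1 rho p) \<rho>"
    by (rule polyhedral_rescale[OF _ _ P]) (use V in simp)
qed

lemma dual_min_ge: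
  assumes rho: "reward_bounded C rho" and V: "0 \<le> V" and p: "prob_vec p"
    and a: "is_dual_min (dual V rho p) a"
  shows "- (V * cmax) \<le> dual V rho p a"
proof -
  have "dual V rho p a \<le> dual V rho p (2 *\<^sub>R a)"
    using a by (simp add: is_dual_min_def scaleR_dual_feasible_iff)
  also have "\<dots> \<le> (\<Sum>k\<in>UNIV. p k * (2 * state_dual V rho k a)) + V * cmax"
    unfolding dual_fun_def by (rule weighted_sum_le_plus[OF p state_dual_scaleR_2_le[OF rho V]])
  also have "(\<Sum>k\<in>UNIV. p k * (2 * state_dual V rho k a)) = 2 * dual V rho p a"
    unfolding dual_fun_def by (simp add: sum_distrib_left mult.left_commute)
  finally show ?thesis by linarith
qed

lemma dual_min_norm_le:
  assumes rho: "reward_bounded C rho" and V: "0 \<le> V" and p: "prob_vec p"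
    and P: "polyhedral (dual V rho p) \<rho>" and a: "is_dual_min (dual V rho p) a"
  shows "\<rho> * norm a \<le> V * (real CARD('n) * \<beta> * rmax + cmax)"
proof -
  have "0 \<in> dual_feasible" by (simp add: dual_feasible_def zero_prod_def)
  then have "dual V rho p a \<le> dual V rho p 0 - \<rho> * norm (a - 0)"
    by (rule polyhedral_sharp_min[OF P a])
  moreover have "dual V rho p 0 \<le> V * utility_max"
    using weighted_sum_le_plus[OF p, of _ "\<lambda>_. 0" "V * utility_max"] state_dual_zero_le[OF V]
    by (simp add: dual_fun_def)
  ultimately have "\<rho> * norm a \<le> V * (utility_max + cmax)"
    using dual_min_ge[OF rho V p a] by (simp add: algebra_simps)
  also have "\<dots> \<le> V * (real CARD('n) * \<beta> * rmax + cmax)"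
    using utility_max_le V by (simp add: mult_left_mono)
  finally show ?thesis .
qed

text \<open>Moving the minimizer one unit along a coordinate of the alpha-d block costs at most
  C + rmax, which caps every sharpness parameter.\<close>
lemma polyhedral_param_le:
  assumes rho: "reward_bounded C rho" and V: "0 \<le> V" and p: "prob_vec p"
    and P: "polyhedral (dual V rho p) \<rho>"
  shows "\<rho> \<le> C + rmax"
proof -
  obtain ad aq ah where a: "is_dual_min (dual V rho p) (ad, aq, ah)"
    using P unfolding polyhedral_def by auto
  define a' where "a' = (ad, aq, ah) + (axis undefined 1, 0, 0)"
  have "a' \<in> dual_feasible"
    using a unfolding is_dual_min_def dual_feasible_def a'_def by (auto simp: axis_def)
  then have "dual V rho p (ad, aq, ah) \<le> dual V rho p a' - \<rho> * norm ((ad, aq, ah) - a')"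
    by (rule polyhedral_sharp_min[OF P a])
  moreover have "norm ((ad, aq, ah) - a') = 1" by (simp add: a'_def norm_Pair)
  moreover have "dual V rho p a' \<le> dual V rho p (ad, aq, ah) + (C + rmax)"
    unfolding dual_fun_def a'_def using p by (intro weighted_sum_le_plus state_dual_add_axis_le[OF rho V])
  ultimately show ?thesis by simp
qed

lemma abs_dual_reward_perturb_le:
  assumes rho: "reward_bounded C rho" and rho': "reward_bounded C rho'" and V: "0 \<le> V"
    and p: "prob_vec p" and close: "\<forall>k. \<forall>b\<in>B k. \<forall>n. \<bar>rho k b n - rho' k b n\<bar> \<le> \<delta>"
  shows "\<bar>dual V rho p \<alpha> - dual V rho' p \<alpha>\<bar> \<le> \<delta> * (real CARD('n) * norm \<alpha>)"
proof -
  have close': "\<forall>k. \<forall>b\<in>B k. \<forall>n. \<bar>rho' k b n - rho k b n\<bar> \<le> \<delta>"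
    using close by (simp add: abs_minus_commute)
  have "dual V rho p \<alpha> \<le> dual V rho' p \<alpha> + \<delta> * (real CARD('n) * norm \<alpha>)"
    unfolding dual_fun_def by (rule weighted_sum_le_plus[OF p state_dual_le_reward_perturb[OF rho' V close]])
  moreover have "dual V rho' p \<alpha> \<le> dual V rho p \<alpha> + \<delta> * (real CARD('n) * norm \<alpha>)"
    unfolding dual_fun_def by (rule weighted_sum_le_plus[OF p state_dual_le_reward_perturb[OF rho V close']])
  ultimately show ?thesis by (simp add: abs_le_iff)
qed

lemma reward_perturbation_dist:
  assumes rho: "reward_bounded C rho" and rho': "reward_bounded C rho'" and V: "0 \<le> V"
    and p: "prob_vec p" and close: "\<forall>k. \<forall>b\<in>B k. \<forall>n. \<bar>rho k b n - rho' k b n\<bar> \<le> \<delta>"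
    and P: "polyhedral (dual V rho p) \<rho>"
    and a: "is_dual_min (dual V rho p) a" and b: "is_dual_min (dual V rho' p) b"
  shows "\<rho> * norm (a - b) \<le> \<delta> * (real CARD('n) * (norm a + norm b))"
  using polyhedral_min_dist_le[OF P a b]
    abs_dual_reward_perturb_le[OF rho rho' V p close, of a]
    abs_dual_reward_perturb_le[OF rho rho' V p close, of b]
  unfolding abs_le_iff by (simp add: algebra_simps)

lemma weight_perturbation_dist:
  assumes bound: "\<And>k \<alpha>. \<bar>state_dual V rho k \<alpha>\<bar> \<le> W + L * norm \<alpha>"
    and close: "\<forall>k. \<bar>p k - q k\<bar> \<le> \<delta>" and P: "polyhedral (dual V rho p) \<rho>"
    and a: "is_dual_min (dual V rho p) a" and b: "is_dual_min (dual V rho q) b"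
  shows "\<rho> * norm (a - b) \<le> real CARD('k) * \<delta> * (2 * W + L * (norm a + norm b))"
proof -
  have "\<rho> * norm (a - b) \<le> (dual V rho p b - dual V rho q b) - (dual V rho p a - dual V rho q a)"
    by (rule polyhedral_min_dist_le[OF P a b])
  also have "\<dots> = (\<Sum>k\<in>UNIV. (p k - q k) * (state_dual V rho k b - state_dual V rho k a))"
    unfolding dual_fun_diff_weights by (simp add: sum_subtractf[symmetric] right_diff_distrib)
  also have "\<dots> \<le> (\<Sum>k\<in>(UNIV::'k set). \<delta> * (2 * W + L * (norm a + norm b)))"
  proof (rule sum_mono)
    fix k
    have "(p k - q k) * (state_dual V rho k b - state_dual V rho k a)
        \<le> \<bar>p k - q k\<bar> * \<bar>state_dual V rho k b - state_dual V rho k a\<bar>"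
      by (simp add: abs_mult[symmetric])
    also have "\<dots> \<le> \<delta> * (2 * W + L * (norm a + norm b))"
      using close bound[of k a] bound[of k b]
      by (intro mult_mono) (auto simp: abs_le_iff algebra_simps)
    finally show "(p k - q k) * (state_dual V rho k b - state_dual V rho k a)
        \<le> \<delta> * (2 * W + L * (norm a + norm b))" .
  qed
  finally show ?thesis by simp
qed

section \<open>Estimation errors\<close>

text \<open>The numerator without its last summand is the Lipschitz constant of
  state_dual_abs_le for rewards bounded by rmax + epsilon_r; the extra N covers the reward
  perturbation estimate.\<close>
definition admissible_eta :: "real \<Rightarrow> bool" where
  "admissible_eta \<eta> \<longleftrightarrow> (\<forall>\<rho>. polyhedral (dual 1 (true_table r mu) \<pi>) \<rho> \<longrightarrow>
     (\<exists>\<rho>'. \<rho> \<le> 2 * \<rho>' \<and> polyhedral (dual 1 (true_table r mu) \<pi>) \<rho>' \<and>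
        1 + (real CARD('n) * (rmax + \<epsilon>r + rmax + Amax + mumax)
             + real CARD('m) * (real CARD('n) * bmax + hmax) + real CARD('n)) / \<rho>' \<le> 1 / (2 * \<eta>)))"

lemma exists_admissible_eta: "\<exists>\<eta>>0. \<eta> \<le> \<eta>0 \<and> admissible_eta \<eta>"
proof (cases "\<exists>\<rho>. polyhedral (dual 1 (true_table r mu) \<pi>) \<rho>")
  case False
  then show ?thesis using eps_pos by (auto simp: admissible_eta_def)
next
  case True
  let ?P = "polyhedral (dual 1 (true_table r mu) \<pi>)"
  let ?L = "real CARD('n) * (rmax + \<epsilon>r + rmax + Amax + mumax)
    + real CARD('m) * (real CARD('n) * bmax + hmax) + real CARD('n)"
  define S where "S = {\<rho>. ?P \<rho>}"
  define \<rho>' where "\<rho>' = Sup S / 2"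
  define \<eta> where "\<eta> = min \<eta>0 (1 / (2 * (1 + ?L / \<rho>')))"
  have tt: "reward_bounded (rmax + \<epsilon>r) (true_table r mu)"
    using eps_pos by (simp add: true_table_reward_bounded)
  have bdd: "bdd_above S"
    using polyhedral_param_le[OF tt zero_le_one pi_prob] unfolding S_def by (intro bdd_aboveI) auto
  obtain \<rho>0 where "\<rho>0 \<in> S" using True by (auto simp: S_def)
  then have "0 < \<rho>0" "\<rho>0 \<le> Sup S" using bdd by (auto simp: S_def polyhedral_def intro: cSup_upper)
  then have "0 < \<rho>'" "\<rho>' < Sup S" by (auto simp: \<rho>'_def)
  then obtain \<rho>'' where "\<rho>'' \<in> S" "\<rho>' < \<rho>''" using less_cSup_iff[OF _ bdd] \<open>\<rho>0 \<in> S\<close> by blast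
  then have P': "?P \<rho>'" using \<open>0 < \<rho>'\<close> by (auto simp: S_def intro: polyhedral_mono_param)
  have "0 \<le> ?L / \<rho>'"
    using rmax_nonneg eps_pos Amax_nonneg mumax_nonneg bmax_nonneg hmax_nonneg \<open>0 < \<rho>'\<close> by simp
  then have "0 < 1 / (2 * (1 + ?L / \<rho>'))" by (intro divide_pos_pos mult_pos_pos) linarith+
  then have "0 < \<eta>" using eps_pos by (simp add: \<eta>_def)
  have "1 + x \<le> 1 / (2 * y)" if "0 \<le> x" "0 < y" "y \<le> 1 / (2 * (1 + x))" for x y :: real
    using that by (simp add: field_simps)
  then have "1 + ?L / \<rho>' \<le> 1 / (2 * \<eta>)"
    using \<open>0 \<le> ?L / \<rho>'\<close> \<open>0 < \<eta>\<close> by (simp add: \<eta>_def)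
  moreover have "\<rho> \<le> 2 * \<rho>'" if "?P \<rho>" for \<rho>
    using that bdd unfolding \<rho>'_def S_def by (simp add: cSup_upper)
  ultimately show ?thesis
    using P' \<open>0 < \<eta>\<close> unfolding admissible_eta_def by (intro exI[of _ \<eta>]) (auto simp: \<eta>_def)
qed

lemma admissible_etaD:
  assumes \<eta>: "admissible_eta \<eta>" and V: "0 < V" and P: "polyhedral (dual V (true_table r mu) \<pi>) \<rho>"
  obtains \<rho>' where "0 < \<rho>" "\<rho> \<le> 2 * \<rho>'" "polyhedral (dual V (true_table r mu) \<pi>) \<rho>'"
    "1 + (real CARD('n) * (rmax + \<epsilon>r + rmax + Amax + mumax)
          + real CARD('m) * (real CARD('n) * bmax + hmax)) / \<rho>' \<le> 1 / (2 * \<eta>)"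
    "real CARD('n) / \<rho>' \<le> 1 / (2 * \<eta>)"
proof -
  let ?L = "real CARD('n) * (rmax + \<epsilon>r + rmax + Amax + mumax) + real CARD('m) * (real CARD('n) * bmax + hmax)"
  have tt: "reward_bounded (rmax + \<epsilon>r) (true_table r mu)"
    using eps_pos by (simp add: true_table_reward_bounded)
  then obtain \<rho>' where \<rho>': "\<rho> \<le> 2 * \<rho>'" "polyhedral (dual V (true_table r mu) \<pi>) \<rho>'"
    and \<eta>_le: "1 + (?L + real CARD('n)) / \<rho>' \<le> 1 / (2 * \<eta>)"
    using \<eta> P polyhedral_dual_iff_unit[OF tt, where V = V] V unfolding admissible_eta_def by auto
  have "0 < \<rho>" using P by (simp add: polyhedral_def)
  moreover have "0 \<le> ?L / \<rho>'" "0 \<le> real CARD('n) / \<rho>'"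
    using rmax_nonneg eps_pos Amax_nonneg mumax_nonneg bmax_nonneg hmax_nonneg \<rho>' \<open>0 < \<rho>\<close> by auto
  ultimately show ?thesis
    using that \<rho>' \<eta>_le unfolding add_divide_distrib by (smt (verit))
qed

lemma reward_estimation_error:
  assumes \<eta>: "0 < \<eta>" "real CARD('n) / \<rho>' \<le> 1 / (2 * \<eta>)" and V: "0 \<le> V"
    and \<rho>: "0 < \<rho>" "\<rho> \<le> 2 * \<rho>'"
    and P: "polyhedral (dual V (true_table r mu) \<pi>) \<rho>'" "polyhedral (dual V rh \<pi>) \<rho>'"
    and close: "close_est \<pi> r mu B \<delta>z \<delta>r p rh" and \<delta>: "0 \<le> \<delta>r" "\<delta>r \<le> \<epsilon>r"
    and a_star: "is_dual_min (dual V (true_table r mu) \<pi>) a_star"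
    and a_tilde: "is_dual_min (dual V rh \<pi>) a_tilde"
  shows "norm (a_star - a_tilde) \<le> 2 * V * (real CARD('n) * \<beta> * rmax + cmax) * \<delta>r / (\<rho> * \<eta>)"
proof -
  have tt: "reward_bounded (rmax + \<epsilon>r) (true_table r mu)"
    using eps_pos by (simp add: true_table_reward_bounded)
  have rh: "reward_bounded (rmax + \<epsilon>r) rh" by (rule estimate_reward_bounded[OF close \<delta>(2)])
  have "\<forall>k. \<forall>b\<in>B k. \<forall>n. \<bar>true_table r mu k b n - rh k b n\<bar> \<le> \<delta>r"
    using close unfolding close_est_def true_table_def by (simp add: abs_minus_commute)
  then have "\<rho>' * norm (a_star - a_tilde) \<le> \<delta>r * (real CARD('n) * (norm a_star + norm a_tilde))"
    by (rule reward_perturbation_dist[OF tt rh V pi_prob _ P(1) a_star a_tilde])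
  then have "norm (a_star - a_tilde) \<le> 2 * \<delta>r * (V * (real CARD('n) * \<beta> * rmax + cmax)) / (\<rho> * \<eta>)"
    by (intro sharp_min_distance_bound[where \<kappa> = 0, OF _ dual_min_norm_le[OF tt V pi_prob P(1) a_star]
        dual_min_norm_le[OF rh V pi_prob P(2) a_tilde] \<rho> _ _ _ \<eta>(1)]) (use \<eta> \<delta> in simp_all)
  then show ?thesis by (simp add: algebra_simps)
qed

lemma distribution_estimation_error:
  assumes \<eta>: "0 < \<eta>" "1 + (real CARD('n) * (rmax + \<epsilon>r + rmax + Amax + mumax)
          + real CARD('m) * (real CARD('n) * bmax + hmax)) / \<rho>' \<le> 1 / (2 * \<eta>)"
    and V: "0 \<le> V" and \<rho>: "0 < \<rho>" "\<rho> \<le> 2 * \<rho>'"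
    and pih: "prob_vec pih" and P: "polyhedral (dual V rh pih) \<rho>'" "polyhedral (dual V rh \<pi>) \<rho>'"
    and close: "close_est \<pi> r mu B \<delta>z \<delta>r pih rh" and \<delta>: "0 \<le> \<delta>z" "\<delta>r \<le> \<epsilon>r"
    and a_hat: "is_dual_min (dual V rh pih) a_hat"
    and a_tilde: "is_dual_min (dual V rh \<pi>) a_tilde"
  shows "norm (a_hat - a_tilde) \<le> 2 * \<delta>z * V * (real CARD('n) * \<beta> * rmax + cmax)
           * (real CARD('k) * (1 + rmax + Amax + mumax + real CARD('n) * bmax + hmax) / \<eta>) / \<rho>"
proof -
  let ?fmax = "real CARD('n) * \<beta> * rmax + cmax"
  let ?Wc = "1 + rmax + Amax + mumax + real CARD('n) * bmax + hmax"
  let ?L = "real CARD('n) * (rmax + \<epsilon>r + rmax + Amax + mumax) + real CARD('m) * (real CARD('n) * bmax + hmax)"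
  have rh: "reward_bounded (rmax + \<epsilon>r) rh" by (rule estimate_reward_bounded[OF close \<delta>(2)])
  have fmax: "0 \<le> V * ?fmax" "V * (utility_max + cmax) \<le> V * ?fmax"
    using utility_max_le utility_max_nonneg cmax_nonneg V by (auto intro: mult_left_mono)
  have "\<rho>' * norm (a_hat - a_tilde) \<le> real CARD('k) * \<delta>z * (2 * (V * ?fmax) + ?L * (norm a_hat + norm a_tilde))"
  proof (rule weight_perturbation_dist[OF _ _ P(1) a_hat a_tilde])
    show "\<bar>state_dual V rh k \<alpha>\<bar> \<le> V * ?fmax + ?L * norm \<alpha>" for k \<alpha>
      using state_dual_abs_le[OF rh V, of k \<alpha>] fmax(2) by (simp add: algebra_simps)
    show "\<forall>k. \<bar>pih k - \<pi> k\<bar> \<le> \<delta>z" using close by (simp add: close_est_def)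
  qed
  then have "norm (a_hat - a_tilde) \<le> 2 * (real CARD('k) * \<delta>z) * (V * ?fmax) / (\<rho> * \<eta>)"
    using rmax_nonneg eps_pos Amax_nonneg mumax_nonneg bmax_nonneg hmax_nonneg
    by (intro sharp_min_distance_bound[where \<kappa> = 1, OF _ dual_min_norm_le[OF rh V pih P(1) a_hat]
        dual_min_norm_le[OF rh V pi_prob P(2) a_tilde] \<rho> _ _ _ \<eta>]) (use \<delta> in simp_all)
  also have "\<dots> \<le> 2 * (real CARD('k) * \<delta>z) * (V * ?fmax) / (\<rho> * \<eta>) * ?Wc"
  proof -
    have "0 \<le> 2 * (real CARD('k) * \<delta>z) * (V * ?fmax) / (\<rho> * \<eta>)"
      using fmax(1) \<delta> \<rho> \<eta> by simp
    moreover have "1 \<le> ?Wc" using rmax_nonneg Amax_nonneg mumax_nonneg bmax_nonneg hmax_nonneg by simp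
    ultimately show ?thesis using mult_left_mono[of 1 ?Wc] by fastforce
  qed
  also have "\<dots> = 2 * \<delta>z * V * ?fmax * (real CARD('k) * ?Wc / \<eta>) / \<rho>"
    by (simp add: field_simps)
  finally show ?thesis .
qed

lemma dual_estimation_bounds:
  assumes \<eta>: "admissible_eta \<eta>" "0 < \<eta>" and V: "1 \<le> V"
    and P_\<rho>: "polyhedral (dual V (true_table r mu) \<pi>) \<rho>"
    and assumption2: "\<forall>pih' rh' \<rho>'. prob_vec pih' \<and> close_est \<pi> r mu B \<epsilon>z \<epsilon>r pih' rh' \<longrightarrow>
          polyhedral (dual V (true_table r mu) \<pi>) \<rho>' \<longrightarrow> polyhedral (dual V rh' pih') \<rho>'"
    and pih: "prob_vec pih" and \<delta>: "0 \<le> \<delta>z" "\<delta>z \<le> \<epsilon>z" "0 \<le> \<delta>r" "\<delta>r \<le> \<epsilon>r"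
    and close: "close_est \<pi> r mu B \<delta>z \<delta>r pih rh"
    and a_star: "is_dual_min (dual V (true_table r mu) \<pi>) a_star"
    and a_tilde: "is_dual_min (dual V rh \<pi>) a_tilde"
    and a_hat: "is_dual_min (dual V rh pih) a_hat"
  shows "norm (a_hat - a_tilde) \<le> 2 * \<delta>z * V * (real CARD('n) * \<beta> * rmax + cmax)
           * (real CARD('k) * (1 + rmax + Amax + mumax + real CARD('n) * bmax + hmax) / \<eta>) / \<rho>"
    and "norm (a_star - a_tilde) \<le> 2 * V * (real CARD('n) * \<beta> * rmax + cmax) * \<delta>r / (\<rho> * \<eta>)"
proof -
  obtain \<rho>' where \<rho>: "0 < \<rho>" "\<rho> \<le> 2 * \<rho>'" and P: "polyhedral (dual V (true_table r mu) \<pi>) \<rho>'"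
    and \<eta>_le: "1 + (real CARD('n) * (rmax + \<epsilon>r + rmax + Amax + mumax)
          + real CARD('m) * (real CARD('n) * bmax + hmax)) / \<rho>' \<le> 1 / (2 * \<eta>)"
      "real CARD('n) / \<rho>' \<le> 1 / (2 * \<eta>)"
    using admissible_etaD[OF \<eta>(1) _ P_\<rho>] V by auto
  have close_eps: "close_est \<pi> r mu B \<epsilon>z \<epsilon>r pih rh" by (rule close_est_mono[OF close \<delta>(2,4)])
  then have "close_est \<pi> r mu B \<epsilon>z \<epsilon>r \<pi> rh" using eps_pos by (simp add: close_est_def)
  then have P_hat: "polyhedral (dual V rh pih) \<rho>'" and P_tilde: "polyhedral (dual V rh \<pi>) \<rho>'"
    using assumption2 pih pi_prob close_eps P by blast+
  have "0 \<le> V" using V by simp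
  show "norm (a_hat - a_tilde) \<le> 2 * \<delta>z * V * (real CARD('n) * \<beta> * rmax + cmax)
           * (real CARD('k) * (1 + rmax + Amax + mumax + real CARD('n) * bmax + hmax) / \<eta>) / \<rho>"
    by (rule distribution_estimation_error[OF \<eta>(2) \<eta>_le(1) \<open>0 \<le> V\<close> \<rho> pih P_hat P_tilde close \<delta>(1,4) a_hat a_tilde])
  show "norm (a_star - a_tilde) \<le> 2 * V * (real CARD('n) * \<beta> * rmax + cmax) * \<delta>r / (\<rho> * \<eta>)"
    by (rule reward_estimation_error[OF \<eta>(2) \<eta>_le(2) \<open>0 \<le> V\<close> \<rho> P P_tilde close \<delta>(3,4) a_star a_tilde])
qed

end

theorem lemma3:
  fixes \<pi> :: "'k::finite \<Rightarrow> real"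
    and A :: "'k \<Rightarrow> real^'n::finite" and e :: "'k \<Rightarrow> real^'m::finite"
    and B :: "'k \<Rightarrow> ('n,'m) alloc set"
    and mu :: "'k \<Rightarrow> ('n,'m) alloc \<Rightarrow> 'n \<Rightarrow> real"
    and c :: "'k \<Rightarrow> ('n,'m) alloc \<Rightarrow> real"
    and r :: "'k \<Rightarrow> 'n \<Rightarrow> real \<Rightarrow> real"
    and U U' :: "'n \<Rightarrow> real \<Rightarrow> real"
    and Amax hmax bmax mumax cmax rmax \<beta> \<epsilon>z \<epsilon>r \<eta>0 :: real
  assumes pi_prob: "prob_vec \<pi>"
    and A_bd: "\<forall>k n. 0 \<le> A k $ n \<and> A k $ n \<le> Amax"
    and e_bd: "\<forall>k m. 0 \<le> e k $ m \<and> e k $ m \<le> hmax"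
    and B_fin: "\<forall>k. finite (B k)"
    and B_nonneg: "\<forall>k. \<forall>b\<in>B k. \<forall>m n. 0 \<le> b $ m $ n"
    and bmax_def: "bmax = Max {b $ m $ n | k b m n. b \<in> B k}"
    and mu_bd: "\<forall>k. \<forall>b\<in>B k. \<forall>n. 0 \<le> mu k b n \<and> mu k b n \<le> mumax"
    and c_bd: "\<forall>k. \<forall>b\<in>B k. 0 \<le> c k b \<and> c k b \<le> cmax"
    and r_bd: "\<forall>k n x. 0 \<le> r k n x \<and> r k n x \<le> rmax"
    and U_incr: "\<forall>n. strict_mono_on {0..} (U n)"
    and U_conc: "\<forall>n. concave_on {0..} (U n)"
    and U_0: "\<forall>n. U n 0 = 0"
    and U_deriv: "\<forall>n. \<forall>x\<ge>0. (U n has_real_derivative U' n x) (at x within {0..})"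
    and beta_def: "\<beta> = Sup {U' n x | n x. 0 \<le> x}"
    and ass1: "assumption1 \<pi> A e B mu r rmax \<epsilon>z \<epsilon>r \<eta>0"
  shows "\<exists>\<eta>. 0 < \<eta> \<and> \<eta> \<le> \<eta>0 \<and>
    (\<forall>V \<rho> pih rh \<delta>z \<delta>r a_star a_tilde a_hat.
      V \<ge> 1 \<longrightarrow>
      polyhedral (dual_fun V U rmax c (true_table r mu) mu A e B \<pi>) \<rho> \<longrightarrow>
      (\<forall>pih' rh' \<rho>'. prob_vec pih' \<and> close_est \<pi> r mu B \<epsilon>z \<epsilon>r pih' rh' \<longrightarrow>
          polyhedral (dual_fun V U rmax c (true_table r mu) mu A e B \<pi>) \<rho>' \<longrightarrow>
          polyhedral (dual_fun V U rmax c rh' mu A e B pih') \<rho>') \<longrightarrow>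
      prob_vec pih \<longrightarrow>
      0 \<le> \<delta>z \<longrightarrow> \<delta>z \<le> \<epsilon>z \<longrightarrow> 0 \<le> \<delta>r \<longrightarrow> \<delta>r \<le> \<epsilon>r \<longrightarrow>
      close_est \<pi> r mu B \<delta>z \<delta>r pih rh \<longrightarrow>
      is_dual_min (dual_fun V U rmax c (true_table r mu) mu A e B \<pi>) a_star \<longrightarrow>
      is_dual_min (dual_fun V U rmax c rh mu A e B \<pi>) a_tilde \<longrightarrow>
      is_dual_min (dual_fun V U rmax c rh mu A e B pih) a_hat \<longrightarrow>
      (let fmax = real CARD('n) * \<beta> * rmax + cmax;
           theta = real CARD('k) * (1 + rmax + Amax + mumax + real CARD('n) * bmax + hmax) / \<eta>
       in norm (a_hat - a_tilde) \<le> 2 * \<delta>z * V * fmax * theta / \<rho>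
        \<and> norm (a_star - a_tilde) \<le> 2 * V * fmax * \<delta>r / (\<rho> * \<eta>)))"
proof -
  interpret resource_system \<pi> A e B mu c r U U' Amax hmax bmax mumax cmax rmax \<beta> \<epsilon>z \<epsilon>r \<eta>0
    unfolding resource_system_def using assms by blast
  obtain \<eta> where \<eta>: "0 < \<eta>" "\<eta> \<le> \<eta>0" "admissible_eta \<eta>"
    using exists_admissible_eta by blast
  show ?thesis
    unfolding Let_def
    by (intro exI[of _ \<eta>] conjI \<eta>(1,2) allI impI)
      (rule dual_estimation_bounds[OF \<eta>(3,1)]; assumption)+
qed

end
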